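(* Let $\mathbb{F}$ be a field with $\mathrm{char}(\mathbb{F})\neq 2,3$. An ideal $I$ of $\hat{\mathcal{H}}$ has finite codimension in $\hat{\mathcal{H}}$ if and only if it is not contained in the ideal $J$. Every non-zero ideal of $\hat{\mathcal{H}}$ which is contained in $J$ has finite codimension in $J$.
   Context: Notation: $\mathbb{N}=\{1,2,3,\dots\}$, $3\mathbb{N}=\{3,6,9,\dots\}$; for $r\in\mathbb{Z}$, $\bar r=r+3\mathbb{Z}\in\mathbb{Z}_3$. The algebra $\hat{\mathcal{H}}$ is the commutative $\mathbb{F}$-algebra with basis $\{a_i:i\in\mathbb{Z}\}\cup\{s_j:j\in\mathbb{N}\}\cup\{p_{\bar r,k}:\bar r\in\{\bar1,\bar2\},\ k\in 3\mathbb{N}\}$, where $s_0=0$, $p_{\bar r,j}=0$ for all $\bar r$ whenever $j\notin 3\mathbb{N}$, $p_{\bar 0,j}=-p_{\bar1,j}-p_{\bar2,j}$, $z_{\bar r,j}=p_{\bar r+\bar1,j}-p_{\bar r-\bar1,j}$, and for $i,i'\in\mathbb{Z}$, $j,l\in\mathbb{N}$, $h,k\in3\mathbb{N}$, $\bar r,\bar t\in\mathbb{Z}_3$: (H1) $a_ia_{i'}=\tfrac12(a_i+a_{i'})+s_{|i-i'|}+z_{\bar\imath,|i-i'|}$; (H2) $a_is_j=-\tfrac34a_i+\tfrac38(a_{i-j}+a_{i+j})+\tfrac32 s_j-z_{\bar\imath,j}$; (H3) $a_ip_{\bar r,k}=\tfrac32p_{\bar r,k}-p_{-(\bar\imath+\bar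 r),k}$; (H4) $s_js_l=\tfrac34(s_j+s_l)-\tfrac38(s_{|j-l|}+s_{j+l})$; (H5) $s_jp_{\bar r,k}=\tfrac34(p_{\bar r,j}+p_{\bar r,k})-\tfrac38(p_{\bar r,|j-k|}+p_{\bar r,j+k})$; (H6) $p_{\bar r,h}p_{\bar t,k}=\tfrac14(z_{-(\bar r+\bar t),h}+z_{-(\bar r+\bar t),k})-\tfrac18(z_{-(\bar r+\bar t),|h-k|}+z_{-(\bar r+\bar t),h+k})$. $J$ is the ideal $\langle p_{\bar1,j},p_{\bar2,j}: j\in3\mathbb{N}\rangle$ of $\hat{\mathcal{H}}$. *)

theory Defs
  imports Main "HOL-Library.Function_Algebras"
begin

text \<open>Index set of the basis of the algebra H-hat:
  A i  stands for a_i (i an integer),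
  S j  stands for s_j (valid only for j >= 1),
  P r k stands for p_{r,k} (valid only for r in {1,2} and k in 3N).\<close>

datatype hidx = A int | S nat | P int nat

fun valid_idx :: "hidx \<Rightarrow> bool" where
  "valid_idx (A i) = True"
| "valid_idx (S j) = (j \<ge> 1)"
| "valid_idx (P r k) = ((r = 1 \<or> r = 2) \<and> k > 0 \<and> 3 dvd k)"

definition Hvec :: "(hidx \<Rightarrow> 'a::field) set" where
  "Hvec = {f. finite {x. f x \<noteq> 0} \<and> (\<forall>x. f x \<noteq> 0 \<longrightarrow> valid_idx x)}"

definition ind :: "hidx \<Rightarrow> (hidx \<Rightarrow> 'a::field)" where
  "ind x = (\<lambda>y. if y = x then 1 else 0)"

definition smul :: "'a::field \<Rightarrow> (hidx \<Rightarrow> 'a) \<Rightarrow> (hidx \<Rightarrow> 'a)" where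
  "smul c f = (\<lambda>x. c * f x)"

definition ndist :: "nat \<Rightarrow> nat \<Rightarrow> nat" where
  "ndist j l = (if j \<le> l then l - j else j - l)"

text \<open>Generalised basis symbols, with the conventions of the paper:
  s_0 = 0; p_{r,j} = 0 for j not in 3N; p_{0,j} = - p_{1,j} - p_{2,j}; residues mod 3.\<close>

definition va :: "int \<Rightarrow> (hidx \<Rightarrow> 'a::field)" where
  "va i = ind (A i)"

definition vs :: "nat \<Rightarrow> (hidx \<Rightarrow> 'a::field)" where
  "vs j = (if j = 0 then 0 else ind (S j))"

definition vp :: "int \<Rightarrow> nat \<Rightarrow> (hidx \<Rightarrow> 'a::field)" where
  "vp r k = (if 0 < k \<and> 3 dvd k then
       (if r mod 3 = 1 then ind (P 1 k)
        else if r mod 3 = 2 then ind (P 2 k)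
        else - ind (P 1 k) - ind (P 2 k))
     else 0)"

definition vz :: "int \<Rightarrow> nat \<Rightarrow> (hidx \<Rightarrow> 'a::field)" where
  "vz r j = vp (r + 1) j - vp (r - 1) j"

definition prodAA :: "int \<Rightarrow> int \<Rightarrow> (hidx \<Rightarrow> 'a::field)" where
  "prodAA i i' = smul (1/2) (va i + va i') + vs (nat \<bar>i - i'\<bar>) + vz i (nat \<bar>i - i'\<bar>)"

definition prodAS :: "int \<Rightarrow> nat \<Rightarrow> (hidx \<Rightarrow> 'a::field)" where
  "prodAS i j = smul (-(3/4)) (va i) + smul (3/8) (va (i - int j) + va (i + int j))
                + smul (3/2) (vs j) - vz i j"

definition prodAP :: "int \<Rightarrow> int \<Rightarrow> nat \<Rightarrow> (hidx \<Rightarrow> 'a::field)" where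
  "prodAP i r k = smul (3/2) (vp r k) - vp (-(i + r)) k"

definition prodSS :: "nat \<Rightarrow> nat \<Rightarrow> (hidx \<Rightarrow> 'a::field)" where
  "prodSS j l = smul (3/4) (vs j + vs l) - smul (3/8) (vs (ndist j l) + vs (j + l))"

definition prodSP :: "nat \<Rightarrow> int \<Rightarrow> nat \<Rightarrow> (hidx \<Rightarrow> 'a::field)" where
  "prodSP j r k = smul (3/4) (vp r j + vp r k) - smul (3/8) (vp r (ndist j k) + vp r (j + k))"

definition prodPP :: "int \<Rightarrow> nat \<Rightarrow> int \<Rightarrow> nat \<Rightarrow> (hidx \<Rightarrow> 'a::field)" where
  "prodPP r h t k = smul (1/4) (vz (-(r + t)) h + vz (-(r + t)) k)
                    - smul (1/8) (vz (-(r + t)) (ndist h k) + vz (-(r + t)) (h + k))"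

definition bprod :: "hidx \<Rightarrow> hidx \<Rightarrow> (hidx \<Rightarrow> 'a::field)" where
  "bprod x y = (case (x, y) of
      (A i, A i') \<Rightarrow> prodAA i i'
    | (A i, S j) \<Rightarrow> prodAS i j
    | (S j, A i) \<Rightarrow> prodAS i j
    | (A i, P r k) \<Rightarrow> prodAP i r k
    | (P r k, A i) \<Rightarrow> prodAP i r k
    | (S j, S l) \<Rightarrow> prodSS j l
    | (S j, P r k) \<Rightarrow> prodSP j r k
    | (P r k, S j) \<Rightarrow> prodSP j r k
    | (P r h, P t k) \<Rightarrow> prodPP r h t k)"

definition hmult :: "(hidx \<Rightarrow> 'a::field) \<Rightarrow> (hidx \<Rightarrow> 'a) \<Rightarrow> (hidx \<Rightarrow> 'a)" where
  "hmult f g = (\<lambda>x. \<Sum>u\<in>{u. f u \<noteq> 0}. \<Sum>v\<in>{v. g v \<noteq> 0}. f u * g v * bprod u v x)"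

definition is_ideal :: "(hidx \<Rightarrow> 'a::field) set \<Rightarrow> bool" where
  "is_ideal I \<longleftrightarrow> I \<subseteq> Hvec \<and> 0 \<in> I \<and>
     (\<forall>f\<in>I. \<forall>g\<in>I. f + g \<in> I) \<and>
     (\<forall>c. \<forall>f\<in>I. smul c f \<in> I) \<and>
     (\<forall>f\<in>I. \<forall>g\<in>Hvec. hmult g f \<in> I)"

definition Jgens :: "(hidx \<Rightarrow> 'a::field) set" where
  "Jgens = {vp r j | r j. (r = 1 \<or> r = 2) \<and> j > 0 \<and> 3 dvd j}"

definition Jid :: "(hidx \<Rightarrow> 'a::field) set" where
  "Jid = \<Inter> {I. is_ideal I \<and> Jgens \<subseteq> I}"

definition fin_codim :: "(hidx \<Rightarrow> 'a::field) set \<Rightarrow> (hidx \<Rightarrow> 'a) set \<Rightarrow> bool" where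
  "fin_codim I W \<longleftrightarrow> (\<exists>B. finite B \<and> B \<subseteq> W \<and>
      (\<forall>w\<in>W. \<exists>c. w - (\<Sum>b\<in>B. smul (c b) b) \<in> I))"

end

theory Submission
  imports Defs
begin

(*
  J is the span of the basis vectors p_(r,k): by (H3), (H5) and (H6) a product with a p-vector has
  no a- or s-components. An ideal inside J therefore contains no vector with an a-coordinate, and
  the classes of the infinitely many a_i cannot be spanned by finitely many vectors.

  Conversely, measure a basis vector by its degree (|i| for a_i, j for s_j, k for p_(r,k)). If an
  ideal contains, for every basis vector x of large degree, a leading element -- non-zero at x and
  otherwise supported on basis vectors of smaller degree -- then induction on the degree reduces
  every basis vector modulo the ideal to the finitely many of small degree. Leading elements are
  obtained from a single element by multiplying with basis vectors: for the p-part from any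
  non-zero element of the ideal inside J (normalised by a_0 and a_1 to have p_1-coefficients only,
  then shifted upwards by s_j), for the a- and s-parts from an element without a-coordinates and
  with a non-zero s-coordinate. Every ideal not contained in J contains such an element, and from
  it, via s_k and p_(r,k) for large k, also a non-zero element of J.
*)

section \<open>Finitely supported vectors and subspaces\<close>

definition supp :: "(hidx \<Rightarrow> 'a::field) \<Rightarrow> hidx set" where
  "supp f = {v. f v \<noteq> 0}"

fun is_A :: "hidx \<Rightarrow> bool" where
  "is_A (A _) = True"
| "is_A _ = False"

fun is_S :: "hidx \<Rightarrow> bool" where
  "is_S (S _) = True"
| "is_S _ = False"

fun is_P :: "hidx \<Rightarrow> bool" where
  "is_P (P _ _) = True"
| "is_P _ = False"

fun deg :: "hidx \<Rightarrow> nat" where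
  "deg (A i) = nat \<bar>i\<bar>"
| "deg (S j) = j"
| "deg (P _ k) = k"

lemma smul_apply: "smul c f x = c * f x"
  by (simp add: smul_def)

lemma sum_fun_apply: "(\<Sum>b\<in>B. F b) x = (\<Sum>b\<in>B. F b x)"
  by (induction B rule: infinite_finite_induct) auto

lemma Hvec_finite_supp: "f \<in> Hvec \<Longrightarrow> finite (supp f)"
  by (simp add: Hvec_def supp_def)

lemma Hvec_valid_idx: "f \<in> Hvec \<Longrightarrow> f v \<noteq> 0 \<Longrightarrow> valid_idx v"
  by (simp add: Hvec_def)

lemma Hvec_S0: "f \<in> Hvec \<Longrightarrow> f (S 0) = 0"
  using Hvec_valid_idx by fastforce

lemma Hvec_zero: "0 \<in> Hvec"
  by (simp add: Hvec_def)

lemma Hvec_add: "f \<in> Hvec \<Longrightarrow> g \<in> Hvec \<Longrightarrow> f + g \<in> Hvec"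
proof -
  assume f: "f \<in> Hvec" and g: "g \<in> Hvec"
  have "{x. (f + g) x \<noteq> 0} \<subseteq> {x. f x \<noteq> 0} \<union> {x. g x \<noteq> 0}"
    by auto
  moreover have "finite ({x. f x \<noteq> 0} \<union> {x. g x \<noteq> 0})"
    using f g by (simp add: Hvec_def)
  ultimately show ?thesis
    using f g finite_subset by (fastforce simp: Hvec_def)
qed

lemma Hvec_smul: "f \<in> Hvec \<Longrightarrow> smul c f \<in> Hvec"
  by (auto simp: Hvec_def smul_def elim!: rev_finite_subset)

lemma smul_zero_left [simp]: "smul 0 f = 0"
  by (simp add: smul_def zero_fun_def)

lemma smul_minus_one: "smul (-1) g = - (g::hidx \<Rightarrow> 'a::field)"
  by (simp add: fun_eq_iff smul_def)

lemma Hvec_uminus: "g \<in> Hvec \<Longrightarrow> - g \<in> Hvec"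
  by (metis Hvec_smul smul_minus_one)

lemma Hvec_diff: "f \<in> Hvec \<Longrightarrow> g \<in> Hvec \<Longrightarrow> f - g \<in> Hvec"
  by (metis Hvec_add Hvec_uminus diff_conv_add_uminus)

lemma Hvec_sum: "(\<And>x. x \<in> F \<Longrightarrow> g x \<in> Hvec) \<Longrightarrow> (\<Sum>x\<in>F. g x) \<in> Hvec"
  by (induction F rule: infinite_finite_induct) (auto simp: Hvec_zero Hvec_add)

lemma ind_in_Hvec: "valid_idx x \<Longrightarrow> ind x \<in> Hvec"
  by (simp add: Hvec_def ind_def)

lemma vp_in_Hvec: "vp r k \<in> Hvec"
  by (simp add: vp_def ind_in_Hvec Hvec_zero Hvec_diff Hvec_uminus)

lemma bprod_in_Hvec: "bprod u v \<in> Hvec"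
proof -
  have basis: "va i \<in> Hvec" "vs j \<in> Hvec" "vz r k \<in> Hvec" for i j r k
    by (simp_all add: va_def vs_def vz_def ind_in_Hvec Hvec_zero vp_in_Hvec Hvec_diff)
  show ?thesis
    by (cases u; cases v) (simp_all add: bprod_def prodAA_def prodAS_def prodAP_def
        prodSS_def prodSP_def prodPP_def Hvec_add Hvec_diff Hvec_smul vp_in_Hvec basis)
qed

lemma hmult_eq_sum: "hmult g f = (\<Sum>u\<in>supp g. \<Sum>v\<in>supp f. smul (g u * f v) (bprod u v))"
  by (rule ext) (simp add: hmult_def supp_def sum_fun_apply smul_def)

lemma hmult_in_Hvec: "hmult g f \<in> Hvec"
  unfolding hmult_eq_sum by (intro Hvec_sum Hvec_smul bprod_in_Hvec)

lemma sum_supp_mult_ind: "finite (supp f) \<Longrightarrow> (\<Sum>v\<in>supp f. f v * ind w v) = f w"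
  by (simp add: ind_def supp_def if_distrib cong: if_cong)

lemma finite_supp_eq_sum_ind: "finite (supp f) \<Longrightarrow> f = (\<Sum>v\<in>supp f. smul (f v) (ind v))"
proof (rule ext)
  fix x assume "finite (supp f)"
  then show "f x = (\<Sum>v\<in>supp f. smul (f v) (ind v)) x"
    by (simp add: sum_fun_apply smul_apply ind_def supp_def if_distrib cong: if_cong)
qed

lemma exists_top_coeff:
  fixes C :: "'b::linorder \<Rightarrow> hidx"
  assumes f: "f \<in> Hvec" and C: "inj C" and x: "f (C x) \<noteq> 0"
  shows "\<exists>m. f (C m) \<noteq> 0 \<and> (\<forall>y. m < y \<longrightarrow> f (C y) = 0)"
proof -
  have fin: "finite {x. f (C x) \<noteq> 0}"
    using finite_vimageI[OF Hvec_finite_supp[OF f] C] by (simp add: supp_def vimage_def)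
  show ?thesis
    using Max_in[OF fin] Max_ge[OF fin] x by (intro exI[of _ "Max {x. f (C x) \<noteq> 0}"]) force
qed

lemma exists_top_S_coeff:
  assumes f: "f \<in> Hvec" and j: "f (S j) \<noteq> 0"
  shows "\<exists>d\<ge>1. f (S d) \<noteq> 0 \<and> (\<forall>l. d < l \<longrightarrow> f (S l) = 0)"
proof -
  obtain d where "f (S d) \<noteq> 0" "\<forall>l. d < l \<longrightarrow> f (S l) = 0"
    using exists_top_coeff[of f S j] f j by (auto intro: injI)
  moreover have "d \<noteq> 0"
    using calculation(1) Hvec_S0[OF f] by (cases d) auto
  ultimately show ?thesis
    by (intro exI[of _ d]) auto
qed

lemma Hvec_deg_bound: "f \<in> Hvec \<Longrightarrow> \<exists>b. \<forall>v. f v \<noteq> 0 \<longrightarrow> deg v < b"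
  using Hvec_finite_supp[of f]
  by (intro exI[of _ "Suc (Max (deg ` supp f))"]) (auto simp: supp_def le_imp_less_Suc)

lemma finite_low_deg: "finite {x. valid_idx x \<and> deg x \<le> D}"
proof (rule finite_subset)
  show "{x. valid_idx x \<and> deg x \<le> D}
      \<subseteq> A ` {- int D..int D} \<union> S ` {..D} \<union> (\<lambda>(t, k). P t k) ` ({1, 2} \<times> {..D})"
  proof
    fix x assume "x \<in> {x. valid_idx x \<and> deg x \<le> D}"
    then show "x \<in> A ` {- int D..int D} \<union> S ` {..D} \<union> (\<lambda>(t, k). P t k) ` ({1, 2} \<times> {..D})"
      by (cases x) (auto simp: image_iff abs_le_iff)
  qed
qed simp

definition is_subspace :: "(hidx \<Rightarrow> 'a::field) set \<Rightarrow> bool" where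
  "is_subspace Q \<longleftrightarrow> 0 \<in> Q \<and> (\<forall>f\<in>Q. \<forall>g\<in>Q. f + g \<in> Q) \<and> (\<forall>c. \<forall>f\<in>Q. smul c f \<in> Q)"

lemma subspace_sum: "is_subspace Q \<Longrightarrow> (\<And>x. x \<in> F \<Longrightarrow> g x \<in> Q) \<Longrightarrow> (\<Sum>x\<in>F. g x) \<in> Q"
  by (induction F rule: infinite_finite_induct) (auto simp: is_subspace_def)

lemma subspace_diff: "is_subspace Q \<Longrightarrow> f \<in> Q \<Longrightarrow> g \<in> Q \<Longrightarrow> f - g \<in> Q"
  by (metis is_subspace_def smul_minus_one diff_conv_add_uminus)

lemma subspace_mem_by_basis:
  assumes "is_subspace Q" "finite (supp f)" "\<And>v. f v \<noteq> 0 \<Longrightarrow> ind v \<in> Q"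
  shows "f \<in> Q"
proof (subst finite_supp_eq_sum_ind[OF assms(2)], rule subspace_sum[OF assms(1)])
  fix v assume "v \<in> supp f"
  then show "smul (f v) (ind v) \<in> Q"
    using assms by (simp add: is_subspace_def supp_def)
qed

lemma ideal_is_subspace: "is_ideal I \<Longrightarrow> is_subspace I"
  by (simp add: is_ideal_def is_subspace_def)

lemma ideal_Hvec: "is_ideal I \<Longrightarrow> f \<in> I \<Longrightarrow> f \<in> Hvec"
  by (auto simp: is_ideal_def)

lemma ideal_add: "is_ideal I \<Longrightarrow> f \<in> I \<Longrightarrow> g \<in> I \<Longrightarrow> f + g \<in> I"
  by (simp add: is_ideal_def)

lemma ideal_smul: "is_ideal I \<Longrightarrow> f \<in> I \<Longrightarrow> smul c f \<in> I"
  by (simp add: is_ideal_def)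

lemma ideal_diff: "is_ideal I \<Longrightarrow> f \<in> I \<Longrightarrow> g \<in> I \<Longrightarrow> f - g \<in> I"
  by (simp add: ideal_is_subspace subspace_diff)

lemma ideal_mult_ind: "is_ideal I \<Longrightarrow> f \<in> I \<Longrightarrow> valid_idx y \<Longrightarrow> hmult (ind y) f \<in> I"
  by (simp add: is_ideal_def ind_in_Hvec)

lemma ideal_Int: "is_ideal I \<Longrightarrow> is_ideal K \<Longrightarrow> is_ideal (I \<inter> K)"
  by (simp add: is_ideal_def) blast

definition plus_span :: "(hidx \<Rightarrow> 'a::field) set \<Rightarrow> (hidx \<Rightarrow> 'a) set \<Rightarrow> (hidx \<Rightarrow> 'a) set" where
  "plus_span I B = {w. \<exists>c. w - (\<Sum>b\<in>B. smul (c b) b) \<in> I}"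

lemma plus_spanI: "w - (\<Sum>b\<in>B. smul (c b) b) \<in> I \<Longrightarrow> w \<in> plus_span I B"
  unfolding plus_span_def by blast

lemma subspace_plus_span:
  assumes I: "is_subspace I"
  shows "is_subspace (plus_span I B)"
proof -
  have add: "(f + g) - (\<Sum>b\<in>B. smul (c b + d b) b)
      = (f - (\<Sum>b\<in>B. smul (c b) b)) + (g - (\<Sum>b\<in>B. smul (d b) b))" for f g c d
    by (simp add: fun_eq_iff sum_fun_apply smul_apply distrib_right sum.distrib)
  have scale: "smul a f - (\<Sum>b\<in>B. smul (a * c b) b) = smul a (f - (\<Sum>b\<in>B. smul (c b) b))"
    for a f c
    by (simp add: fun_eq_iff sum_fun_apply smul_apply sum_distrib_left right_diff_distrib mult.assoc)
  have "0 \<in> plus_span I B"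
    using I by (auto simp: plus_span_def is_subspace_def intro!: exI[of _ "\<lambda>_. 0"])
  moreover have "f + g \<in> plus_span I B" if fg: "f \<in> plus_span I B" "g \<in> plus_span I B" for f g
  proof -
    obtain c d where "f - (\<Sum>b\<in>B. smul (c b) b) \<in> I" "g - (\<Sum>b\<in>B. smul (d b) b) \<in> I"
      using fg unfolding plus_span_def by blast
    then have "(f + g) - (\<Sum>b\<in>B. smul (c b + d b) b) \<in> I"
      unfolding add using I by (simp add: is_subspace_def)
    then show ?thesis
      by (rule plus_spanI)
  qed
  moreover have "smul a f \<in> plus_span I B" if f: "f \<in> plus_span I B" for a f
  proof -
    obtain c where "f - (\<Sum>b\<in>B. smul (c b) b) \<in> I"
      using f unfolding plus_span_def by blast
    then have "smul a f - (\<Sum>b\<in>B. smul (a * c b) b) \<in> I"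
      unfolding scale using I by (simp add: is_subspace_def)
    then show ?thesis
      by (rule plus_spanI)
  qed
  ultimately show ?thesis
    by (simp add: is_subspace_def)
qed

lemma subset_plus_span: "I \<subseteq> plus_span I B"
  by (auto simp: plus_span_def intro!: exI[of _ "\<lambda>_. 0"])

lemma generator_in_plus_span:
  assumes "is_subspace I" "finite B" "b \<in> B"
  shows "b \<in> plus_span I B"
proof -
  have "(\<Sum>b'\<in>B. smul (of_bool (b' = b)) b') = (\<Sum>b'\<in>B. if b' = b then b else 0)"
    by (rule sum.cong) (auto simp: fun_eq_iff smul_apply)
  then have "b - (\<Sum>b'\<in>B. smul (of_bool (b' = b)) b') = 0"
    using assms(2,3) by simp
  then show ?thesis
    using assms(1) unfolding plus_span_def is_subspace_def by (metis (mono_tags) mem_Collect_eq)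
qed

lemma fin_codimI:
  assumes I: "is_subspace I" and F: "finite F" "ind ` F \<subseteq> W" and W: "W \<subseteq> Hvec"
    and reduce: "\<And>w v. w \<in> W \<Longrightarrow> w v \<noteq> 0 \<Longrightarrow> ind v \<in> plus_span I (ind ` F)"
  shows "fin_codim I W"
  unfolding fin_codim_def
proof (intro exI[of _ "ind ` F"] conjI ballI)
  fix w assume "w \<in> W"
  then have "w \<in> plus_span I (ind ` F)"
    using subspace_mem_by_basis[OF subspace_plus_span[OF I]] W reduce Hvec_finite_supp by blast
  then show "\<exists>c. w - (\<Sum>b\<in>ind ` F. smul (c b) b) \<in> I"
    by (simp add: plus_span_def)
qed (use F in auto)

text \<open>Subtracting a multiple of the leading element g from ind x leaves basis vectors that are
  already in Q or of smaller degree.\<close>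
lemma basis_in_subspace_by_leading_elements:
  fixes Q :: "(hidx \<Rightarrow> 'a::field) set" and mu :: "hidx \<Rightarrow> nat"
  assumes Q: "is_subspace Q"
    and low: "\<And>x. Pr x \<Longrightarrow> mu x \<le> d \<Longrightarrow> ind x \<in> Q"
    and leading: "\<And>x. Pr x \<Longrightarrow> d < mu x \<Longrightarrow> \<exists>g\<in>Q. g \<in> Hvec \<and> g x \<noteq> 0 \<and>
                   (\<forall>y. g y \<noteq> 0 \<longrightarrow> y \<noteq> x \<longrightarrow> ind y \<in> Q \<or> Pr y \<and> mu y < mu x)"
  shows "Pr x \<Longrightarrow> ind x \<in> Q"
proof (induction "mu x" arbitrary: x rule: less_induct)
  case less
  show ?case
  proof (cases "mu x \<le> d")
    case True
    then show ?thesis using low less.prems by blast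
  next
    case False
    then obtain g where g: "g \<in> Q" "g \<in> Hvec" "g x \<noteq> 0"
      and lower: "\<forall>y. g y \<noteq> 0 \<longrightarrow> y \<noteq> x \<longrightarrow> ind y \<in> Q \<or> Pr y \<and> mu y < mu x"
      using leading less.prems by force
    define rest where "rest = g - smul (g x) (ind x)"
    have "rest \<in> Q"
    proof (rule subspace_mem_by_basis[OF Q])
      show "finite (supp rest)"
        using g(2) by (auto simp: rest_def supp_def smul_apply ind_def
            intro: rev_finite_subset[OF Hvec_finite_supp[unfolded supp_def]])
      fix y assume "rest y \<noteq> 0"
      then have "g y \<noteq> 0" "y \<noteq> x"
        by (auto simp: rest_def smul_apply ind_def split: if_splits)
      then show "ind y \<in> Q"
        using lower less.hyps by blast
    qed
    moreover have "ind x = smul (1 / g x) (g - rest)"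
      using g(3) by (simp add: rest_def fun_eq_iff smul_apply)
    moreover have "g - rest \<in> Q"
      using subspace_diff[OF Q g(1) \<open>rest \<in> Q\<close>] .
    ultimately show ?thesis
      using Q by (simp add: is_subspace_def)
  qed
qed

section \<open>The ideal J\<close>

definition Pspan :: "(hidx \<Rightarrow> 'a::field) set" where
  "Pspan = {f \<in> Hvec. \<forall>v. f v \<noteq> 0 \<longrightarrow> is_P v}"

lemma Pspan_coeff_eq_0: "f \<in> Pspan \<Longrightarrow> \<not> is_P v \<Longrightarrow> f v = 0"
  by (auto simp: Pspan_def)

lemma Pspan_supp: "f \<in> Pspan \<Longrightarrow> f v \<noteq> 0 \<Longrightarrow> \<exists>t k. v = P t k"
  by (cases v) (auto simp: Pspan_def)

lemma Pspan_Hvec: "f \<in> Pspan \<Longrightarrow> f \<in> Hvec"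
  by (simp add: Pspan_def)

lemma Pspan_coeff_invalid: "f \<in> Pspan \<Longrightarrow> \<not> valid_idx v \<Longrightarrow> f v = 0"
  using Hvec_valid_idx Pspan_Hvec by blast

lemma Pspan_deg_less:
  assumes "f \<in> Pspan" "f y \<noteq> 0" "y \<noteq> P s n"
    and "\<And>r k. n \<le> k \<Longrightarrow> (r, k) \<noteq> (s, n) \<Longrightarrow> f (P r k) = 0"
  shows "deg y < n"
  using assms Pspan_supp[OF assms(1,2)] by (metis deg.simps(3) not_less prod.inject)

lemma ind_in_Pspan: "valid_idx x \<Longrightarrow> is_P x \<Longrightarrow> ind x \<in> Pspan"
  using ind_in_Hvec[of x] by (auto simp: Pspan_def ind_def)

lemma bprod_P_coeff_non_P: "is_P u \<or> is_P v \<Longrightarrow> \<not> is_P x \<Longrightarrow> bprod u v x = 0"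
  by (cases u; cases v; cases x) (simp_all add: bprod_def prodAP_def prodSP_def prodPP_def
      smul_def vz_def vp_def ind_def)

lemma hmult_in_Pspan: "g \<in> Pspan \<or> f \<in> Pspan \<Longrightarrow> hmult g f \<in> Pspan"
proof -
  assume gf: "g \<in> Pspan \<or> f \<in> Pspan"
  have "hmult g f x = 0" if "\<not> is_P x" for x
    unfolding hmult_def
  proof (intro sum.neutral ballI)
    fix u v assume "u \<in> {u. g u \<noteq> 0}" "v \<in> {v. f v \<noteq> 0}"
    then have "is_P u \<or> is_P v"
      using gf by (auto simp: Pspan_def)
    with that show "g u * f v * bprod u v x = 0"
      by (simp add: bprod_P_coeff_non_P)
  qed
  then show ?thesis
    by (auto simp: Pspan_def hmult_in_Hvec)
qed

lemma Pspan_ideal: "is_ideal (Pspan :: (hidx \<Rightarrow> 'a::field) set)"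
proof -
  have "f + g \<in> Pspan" if "f \<in> Pspan" "g \<in> Pspan" for f g :: "hidx \<Rightarrow> 'a"
    using that by (auto simp: Pspan_def Hvec_add) (metis add.right_neutral)
  moreover have "smul c f \<in> Pspan" if "f \<in> Pspan" for c and f :: "hidx \<Rightarrow> 'a"
    using that by (auto simp: Pspan_def Hvec_smul smul_apply)
  moreover have "0 \<in> Pspan"
    by (simp add: Pspan_def Hvec_zero)
  ultimately show ?thesis
    unfolding is_ideal_def using hmult_in_Pspan Pspan_Hvec by blast
qed

lemma Jid_eq_Pspan: "(Jid :: (hidx \<Rightarrow> 'a::field) set) = Pspan"
proof
  have "Jgens \<subseteq> (Pspan :: (hidx \<Rightarrow> 'a) set)"
    by (auto simp: Jgens_def vp_def intro: ind_in_Pspan)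
  then show "Jid \<subseteq> (Pspan :: (hidx \<Rightarrow> 'a) set)"
    unfolding Jid_def using Pspan_ideal by blast
next
  show "(Pspan :: (hidx \<Rightarrow> 'a) set) \<subseteq> Jid"
  proof (unfold Jid_def, intro subsetI InterI)
    fix f :: "hidx \<Rightarrow> 'a" and I :: "(hidx \<Rightarrow> 'a) set"
    assume f: "f \<in> Pspan" and "I \<in> {I. is_ideal I \<and> Jgens \<subseteq> I}"
    then have I: "is_ideal I" "Jgens \<subseteq> I" by auto
    show "f \<in> I"
    proof (rule subspace_mem_by_basis[OF ideal_is_subspace[OF I(1)]])
      show "finite (supp f)"
        using f by (simp add: Pspan_Hvec Hvec_finite_supp)
      fix v assume fv: "f v \<noteq> 0"
      then obtain t k where v: "v = P t k"
        using Pspan_supp f by blast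
      have "valid_idx v"
        using fv f by (auto simp: Pspan_def Hvec_def)
      then have "ind v \<in> (Jgens :: (hidx \<Rightarrow> 'a) set)"
        using v by (auto simp: Jgens_def vp_def intro!: exI[of _ t] exI[of _ k])
      then show "ind v \<in> I" using I by blast
    qed
  qed
qed

text \<open>Elements of J have no a-coordinates, while the a-coordinates of finitely many vectors
  all vanish at some a_i.\<close>
lemma not_fin_codim_Hvec:
  fixes I :: "(hidx \<Rightarrow> 'a::field) set"
  assumes "I \<subseteq> Pspan"
  shows "\<not> fin_codim I Hvec"
proof
  assume "fin_codim I Hvec"
  then obtain B where B: "finite B" "B \<subseteq> Hvec"
    and span: "\<forall>w\<in>Hvec. \<exists>c. w - (\<Sum>b\<in>B. smul (c b) b) \<in> I"
    unfolding fin_codim_def by blast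
  have "finite (A -` supp b)" if "b \<in> B" for b
    using that B(2) Hvec_finite_supp by (blast intro: finite_vimageI injI)
  then have "finite (\<Union>b\<in>B. A -` supp b)"
    using B(1) by blast
  then obtain i where i: "i \<notin> (\<Union>b\<in>B. A -` supp b)"
    using ex_new_if_finite[OF infinite_UNIV_int] by blast
  obtain c where c: "ind (A i) - (\<Sum>b\<in>B. smul (c b) b) \<in> I"
    using span ind_in_Hvec[of "A i"] by auto
  have "(\<Sum>b\<in>B. smul (c b) b (A i)) = 0"
    using i by (intro sum.neutral) (auto simp: smul_apply supp_def)
  then have "(ind (A i) - (\<Sum>b\<in>B. smul (c b) b)) (A i) = 1"
    by (simp add: sum_fun_apply ind_def)
  moreover have "(ind (A i) - (\<Sum>b\<in>B. smul (c b) b)) (A i) = 0"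
    using c assms Pspan_coeff_eq_0[of "ind (A i) - (\<Sum>b\<in>B. smul (c b) b)" "A i"] by auto
  ultimately show False
    by simp
qed

section \<open>Coefficients of products with basis vectors\<close>

lemma numerals_nonzero:
  assumes "(2::'a::field) \<noteq> 0"
  shows "(4::'a) \<noteq> 0" "(8::'a) \<noteq> 0"
proof -
  have "(4::'a) = 2 * 2" "(8::'a) = 2 * 2 * 2"
    by simp_all
  then show "(4::'a) \<noteq> 0" "(8::'a) \<noteq> 0"
    using assms by (simp_all only: mult_eq_0_iff de_Morgan_disj simp_thms)
qed

definition sum_A :: "(hidx \<Rightarrow> 'a::field) \<Rightarrow> 'a" where
  "sum_A f = (\<Sum>v\<in>supp f. f v * of_bool (is_A v))"

definition sum_S :: "(hidx \<Rightarrow> 'a::field) \<Rightarrow> 'a" where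
  "sum_S f = (\<Sum>v\<in>supp f. f v * of_bool (is_S v))"

lemma sum_S_eq_0: "(\<forall>j. f (S j) = 0) \<Longrightarrow> sum_S f = 0"
  unfolding sum_S_def by (rule sum.neutral) (auto elim: is_S.elims)

lemma sum_mult_add:
  "(\<Sum>v\<in>X. f v * (g v + h v)) = (\<Sum>v\<in>X. f v * g v) + (\<Sum>v\<in>X. f v * (h v::'a::field))"
  by (simp add: distrib_left sum.distrib)

lemma sum_mult_diff:
  "(\<Sum>v\<in>X. f v * (g v - h v)) = (\<Sum>v\<in>X. f v * g v) - (\<Sum>v\<in>X. f v * (h v::'a::field))"
  by (simp add: right_diff_distrib sum_subtractf)

lemma sum_mult_scale: "(\<Sum>v\<in>X. f v * (c * g v)) = c * (\<Sum>v\<in>X. f v * (g v::'a::field))"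
  by (simp add: sum_distrib_left mult.left_commute)

lemmas coeff_sum_simps = sum_mult_add sum_mult_diff sum_mult_scale sum_supp_mult_ind Hvec_finite_supp

lemma hmult_ind_coeff:
  assumes "f \<in> Hvec" and "\<And>v. f v \<noteq> 0 \<Longrightarrow> valid_idx v \<Longrightarrow> bprod y v x = F v"
  shows "hmult (ind y) f x = (\<Sum>v\<in>supp f. f v * F v)"
proof -
  have "{u. ind y u \<noteq> (0::'a)} = {y}"
    by (auto simp: ind_def)
  then have "hmult (ind y) f x = (\<Sum>v\<in>supp f. f v * bprod y v x)"
    by (simp add: hmult_def supp_def ind_def)
  also have "\<dots> = (\<Sum>v\<in>supp f. f v * F v)"
    using assms by (intro sum.cong) (auto simp: supp_def Hvec_def)
  finally show ?thesis .
qed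

lemma hmult_ind_coeff_Pspan:
  assumes "f \<in> Pspan"
    and "\<And>t h. f (P t h) \<noteq> 0 \<Longrightarrow> valid_idx (P t h) \<Longrightarrow> bprod y (P t h) x = F (P t h)"
  shows "hmult (ind y) f x = (\<Sum>v\<in>supp f. f v * F v)"
proof (rule hmult_ind_coeff)
  show "f \<in> Hvec"
    using assms(1) by (rule Pspan_Hvec)
  fix v assume "f v \<noteq> 0" "valid_idx v"
  then show "bprod y v x = F v"
    using assms Pspan_supp by blast
qed

lemma of_bool_eq_ndist:
  "(l::nat) \<ge> 1 \<Longrightarrow> j \<ge> 1 \<Longrightarrow>
    of_bool (j = ndist n l) = of_bool (n + j = l) + (of_bool (n - j = l) :: 'a::field)"
  by (auto simp: ndist_def)

lemma of_bool_eq_add: "(l::nat) \<ge> 1 \<Longrightarrow> of_bool (j = n + l) = (of_bool (j - n = l) :: 'a::field)"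
  by auto

lemma va_coeff_A: "va i (A m) = of_bool (m = i)"
  by (simp add: va_def ind_def)

lemma vs_coeff_S: "j \<ge> 1 \<Longrightarrow> vs l (S j) = of_bool (j = l)"
  by (simp add: vs_def ind_def)

lemma basis_coeff_simps [simp]:
  "va i (S j) = 0" "va i (P r k) = 0" "vs l (A i) = 0" "vs l (P r k) = 0"
  "vp r k (A i) = 0" "vp r k (S j) = 0" "vz r k (A i) = 0" "vz r k (S j) = 0"
  by (simp_all add: va_def vs_def vp_def vz_def ind_def)

lemma vp_coeff_P:
  "0 < k \<Longrightarrow> 3 dvd k \<Longrightarrow> vp r h (P t k) = of_bool (h = k) *
    (if r mod 3 = 1 then of_bool (t = 1) else if r mod 3 = 2 then of_bool (t = 2)
     else - of_bool (t = 1) - of_bool (t = 2))"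
  by (auto simp: vp_def ind_def)

lemma S_times_coeff_A:
  assumes "f \<in> Hvec"
  shows "hmult (ind (S n)) f (A m) = -(3/4) * f (A m) + 3/8 * f (A (m + int n)) + 3/8 * f (A (m - int n))"
proof -
  have "hmult (ind (S n)) f (A m)
      = (\<Sum>v\<in>supp f. f v * (-(3/4) * ind (A m) v + 3/8 * ind (A (m + int n)) v
                             + 3/8 * ind (A (m - int n)) v))"
  proof (rule hmult_ind_coeff[OF assms], goal_cases)
    case (1 v)
    show ?case
      by (cases v) (auto simp: bprod_def prodAS_def prodSS_def prodSP_def smul_def va_def vs_def
          vz_def vp_def ind_def)
  qed
  then show ?thesis
    using assms by (simp only: coeff_sum_simps)
qed

lemma S_times_coeff_S:
  fixes f :: "hidx \<Rightarrow> 'a::field"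
  assumes two: "(2::'a) \<noteq> 0" and f: "f \<in> Hvec" and j: "j \<ge> 1"
  shows "hmult (ind (S n)) f (S j) = 3/2 * of_bool (j = n) * sum_A f + 3/4 * of_bool (j = n) * sum_S f
     + 3/4 * f (S j) - 3/8 * (f (S (n + j)) + f (S (n - j)) + f (S (j - n)))"
proof -
  have "hmult (ind (S n)) f (S j) = (\<Sum>v\<in>supp f. f v * ((3/2 * of_bool (j = n)) * of_bool (is_A v)
     + (3/4 * of_bool (j = n)) * of_bool (is_S v) + 3/4 * ind (S j) v
     - 3/8 * (ind (S (n + j)) v + ind (S (n - j)) v + ind (S (j - n)) v)))"
  proof (rule hmult_ind_coeff[OF f], goal_cases)
    case (1 v)
    show ?case
      using 1(2) j two
      by (cases v; simp add: bprod_def prodAS_def prodSS_def prodSP_def smul_apply va_coeff_A vs_coeff_S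
          ind_def of_bool_eq_ndist of_bool_eq_add; auto simp: field_simps numerals_nonzero of_bool_def)
  qed
  then show ?thesis
    using f by (simp only: coeff_sum_simps sum_A_def sum_S_def)
qed

lemma A_times_coeff_A:
  fixes f :: "hidx \<Rightarrow> 'a::field"
  assumes two: "(2::'a) \<noteq> 0" and f: "f \<in> Hvec"
  shows "hmult (ind (A i)) f (A m) = 1/2 * of_bool (m = i) * sum_A f - 3/4 * of_bool (m = i) * sum_S f
     + 1/2 * f (A m) + 3/8 * (f (S (nat (i - m))) + f (S (nat (m - i))))"
proof -
  have "hmult (ind (A i)) f (A m) = (\<Sum>v\<in>supp f. f v * ((1/2 * of_bool (m = i)) * of_bool (is_A v)
     - (3/4 * of_bool (m = i)) * of_bool (is_S v) + 1/2 * ind (A m) v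
     + 3/8 * (ind (S (nat (i - m))) v + ind (S (nat (m - i))) v)))"
  proof (rule hmult_ind_coeff[OF f], goal_cases)
    case (1 v)
    show ?case
      using 1(2) two
      by (cases v; simp add: bprod_def prodAA_def prodAS_def prodAP_def smul_apply va_coeff_A ind_def;
          auto simp: field_simps numerals_nonzero of_bool_def)
  qed
  then show ?thesis
    using f by (simp only: coeff_sum_simps sum_A_def sum_S_def)
qed

lemma A_times_coeff_S:
  fixes f :: "hidx \<Rightarrow> 'a::field"
  assumes two: "(2::'a) \<noteq> 0" and f: "f \<in> Hvec" and j: "j \<ge> 1"
  shows "hmult (ind (A i)) f (S j) = f (A (i - int j)) + f (A (i + int j)) + 3/2 * f (S j)"
proof -
  have "hmult (ind (A i)) f (S j)
      = (\<Sum>v\<in>supp f. f v * (ind (A (i - int j)) v + ind (A (i + int j)) v + 3/2 * ind (S j) v))"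
  proof (rule hmult_ind_coeff[OF f], goal_cases)
    case (1 v)
    show ?case
      using 1(2) j two
      by (cases v; simp add: bprod_def prodAA_def prodAS_def prodAP_def smul_apply vs_coeff_S ind_def;
          auto simp: field_simps numerals_nonzero of_bool_def)
  qed
  then show ?thesis
    using f by (simp only: coeff_sum_simps)
qed

lemma A_times_coeff_P:
  fixes f :: "hidx \<Rightarrow> 'a::field"
  assumes two: "(2::'a) \<noteq> 0" and f: "f \<in> Pspan" and k: "0 < k" "3 dvd k"
  shows "hmult (ind (A 0)) f (P 1 k) = 3/2 * f (P 1 k) - f (P 2 k)"
    and "hmult (ind (A 0)) f (P 2 k) = 3/2 * f (P 2 k) - f (P 1 k)"
    and "hmult (ind (A 1)) f (P 1 k) = 1/2 * f (P 1 k) + f (P 2 k)"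
    and "hmult (ind (A 1)) f (P 2 k) = 5/2 * f (P 2 k)"
proof -
  note simps = bprod_def prodAP_def smul_apply vp_coeff_P ind_def field_simps numerals_nonzero
  have fin: "finite (supp f)"
    using f by (simp add: Pspan_Hvec Hvec_finite_supp)
  have "hmult (ind (A 0)) f (P 1 k) = (\<Sum>v\<in>supp f. f v * (3/2 * ind (P 1 k) v - ind (P 2 k) v))"
    by (rule hmult_ind_coeff_Pspan[OF f]) (use k two in \<open>auto simp: simps\<close>)
  then show "hmult (ind (A 0)) f (P 1 k) = 3/2 * f (P 1 k) - f (P 2 k)"
    using fin by (simp only: coeff_sum_simps)
  have "hmult (ind (A 0)) f (P 2 k) = (\<Sum>v\<in>supp f. f v * (3/2 * ind (P 2 k) v - ind (P 1 k) v))"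
    by (rule hmult_ind_coeff_Pspan[OF f]) (use k two in \<open>auto simp: simps\<close>)
  then show "hmult (ind (A 0)) f (P 2 k) = 3/2 * f (P 2 k) - f (P 1 k)"
    using fin by (simp only: coeff_sum_simps)
  have "hmult (ind (A 1)) f (P 1 k) = (\<Sum>v\<in>supp f. f v * (1/2 * ind (P 1 k) v + ind (P 2 k) v))"
    by (rule hmult_ind_coeff_Pspan[OF f]) (use k two in \<open>auto simp: simps\<close>)
  then show "hmult (ind (A 1)) f (P 1 k) = 1/2 * f (P 1 k) + f (P 2 k)"
    using fin by (simp only: coeff_sum_simps)
  have "hmult (ind (A 1)) f (P 2 k) = (\<Sum>v\<in>supp f. f v * (5/2 * ind (P 2 k) v))"
    by (rule hmult_ind_coeff_Pspan[OF f]) (use k two in \<open>auto simp: simps\<close>)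
  then show "hmult (ind (A 1)) f (P 2 k) = 5/2 * f (P 2 k)"
    using fin by (simp only: coeff_sum_simps)
qed

lemma S_times_coeff_P_above:
  fixes f :: "hidx \<Rightarrow> 'a::field"
  assumes f: "f \<in> Pspan" and f2: "\<forall>h. f (P 2 h) = 0" and fD: "\<forall>h. f (P 1 h) \<noteq> 0 \<longrightarrow> h \<le> D"
    and j: "j \<ge> 1" and k: "k \<ge> j + D" "0 < k" "3 dvd k"
  shows "hmult (ind (S j)) f (P r k) = -(3/8) * of_bool (r = 1) * f (P 1 (k - j))"
proof -
  have "hmult (ind (S j)) f (P r k)
      = (\<Sum>v\<in>supp f. f v * ((-(3/8) * of_bool (r = 1)) * ind (P 1 (k - j)) v))"
  proof (rule hmult_ind_coeff_Pspan[OF f])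
    fix t h assume fth: "f (P t h) \<noteq> 0" and valid: "valid_idx (P t h)"
    then have "t = 1" "h \<le> D" "0 < h" "3 dvd h"
      using f2 fD by auto
    moreover have "j \<noteq> k" "h \<noteq> k" "ndist j h \<noteq> k" "(j + h = k) = (k - j = h)"
      using calculation j k by (auto simp: ndist_def)
    ultimately show "bprod (S j) (P t h) (P r k) = -(3/8) * of_bool (r = 1) * ind (P 1 (k - j)) (P t h)"
      using k by (simp add: bprod_def prodSP_def smul_apply vp_coeff_P ind_def)
  qed
  then show ?thesis
    using f by (simp only: coeff_sum_simps Pspan_Hvec)
qed

lemma bprod_P_coeff_P_shift:
  fixes r :: int
  assumes two: "(2::'a::field) \<noteq> 0" and r: "r = 1 \<or> r = 2" and n: "n \<ge> 1" "3 dvd n"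
    and k: "n < k" "3 dvd k" and v: "valid_idx v" "\<not> is_A v"
    and low: "is_S v \<Longrightarrow> deg v \<le> n" "is_P v \<Longrightarrow> deg v < k"
  shows "(bprod (P r k) v (P r (k + n)) :: 'a) = -(3/8) * ind (S n) v
      + (if r = 1 then -(1/8) else 1/8) * (ind (P 1 n) v + ind (P 2 n) v)"
proof (cases v)
  case (A i)
  then show ?thesis using v by simp
next
  case (S l)
  have "l \<le> n" "l \<ge> 1"
    using low v S by auto
  then have "l \<noteq> k + n" "k \<noteq> k + n" "ndist l k \<noteq> k + n" "(l + k = k + n) = (l = n)"
    using n k by (auto simp: ndist_def)
  then show ?thesis
    unfolding S using r n k two
    by (auto simp: bprod_def prodSP_def smul_apply vp_coeff_P ind_def field_simps numerals_nonzero)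
next
  case (P t h)
  have "h < k" "t = 1 \<or> t = 2"
    using low v P by auto
  then have "h \<noteq> k + n" "k \<noteq> k + n" "ndist k h \<noteq> k + n" "(k + h = k + n) = (h = n)"
    using n k by (auto simp: ndist_def)
  with r \<open>t = 1 \<or> t = 2\<close> show ?thesis
    unfolding P using n k two
    by (elim disjE) (simp_all add: bprod_def prodPP_def smul_apply vz_def vp_coeff_P ind_def
        field_simps numerals_nonzero)
qed

lemma P_times_coeff_P_shift:
  fixes H :: "hidx \<Rightarrow> 'a::field"
  assumes two: "(2::'a) \<noteq> 0" and H: "H \<in> Hvec" and HA: "\<forall>i. H (A i) = 0"
    and HS: "\<forall>l. H (S l) \<noteq> 0 \<longrightarrow> l \<le> n" and HP: "\<forall>t h. H (P t h) \<noteq> 0 \<longrightarrow> h < k"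
    and n: "n \<ge> 1" "3 dvd n" and k: "n < k" "3 dvd k"
  shows "hmult (ind (P 1 k)) H (P 1 (k + n)) = -(3/8) * H (S n) - 1/8 * (H (P 1 n) + H (P 2 n))"
    and "hmult (ind (P 2 k)) H (P 2 (k + n)) = -(3/8) * H (S n) + 1/8 * (H (P 1 n) + H (P 2 n))"
proof -
  have column: "(bprod (P r k) v (P r (k + n)) :: 'a) = -(3/8) * ind (S n) v
      + (if r = 1 then -(1/8) else 1/8) * (ind (P 1 n) v + ind (P 2 n) v)"
    if "r = 1 \<or> r = 2" "H v \<noteq> 0" "valid_idx v" for r v
    using that HA HS HP
    by (intro bprod_P_coeff_P_shift[OF two _ n k]) (auto elim: is_A.elims is_S.elims is_P.elims)
  have "hmult (ind (P 1 k)) H (P 1 (k + n))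
      = (\<Sum>v\<in>supp H. H v * (-(3/8) * ind (S n) v - 1/8 * (ind (P 1 n) v + ind (P 2 n) v)))"
    by (rule hmult_ind_coeff[OF H]) (simp add: column)
  then show "hmult (ind (P 1 k)) H (P 1 (k + n)) = -(3/8) * H (S n) - 1/8 * (H (P 1 n) + H (P 2 n))"
    using H by (simp only: coeff_sum_simps)
  have "hmult (ind (P 2 k)) H (P 2 (k + n))
      = (\<Sum>v\<in>supp H. H v * (-(3/8) * ind (S n) v + 1/8 * (ind (P 1 n) v + ind (P 2 n) v)))"
    by (rule hmult_ind_coeff[OF H]) (simp add: column)
  then show "hmult (ind (P 2 k)) H (P 2 (k + n)) = -(3/8) * H (S n) + 1/8 * (H (P 1 n) + H (P 2 n))"
    using H by (simp only: coeff_sum_simps)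
qed

section \<open>Special elements of an ideal\<close>

text \<open>On a-coordinates s_j acts as (3/8)(T_j - 2), where T_j f (a_m) = f (a_(m+j)) + f (a_(m-j)).
  Since T_1^2 = T_2 + 2, the combination s_1^2 + (3/2) s_1 - (3/8) s_2 annihilates them.\<close>
definition drop_A :: "(hidx \<Rightarrow> 'a::field) \<Rightarrow> (hidx \<Rightarrow> 'a)" where
  "drop_A f = hmult (ind (S 1)) (hmult (ind (S 1)) f) + smul (3/2) (hmult (ind (S 1)) f)
     + smul (-(3/8)) (hmult (ind (S 2)) f)"

lemma drop_A_in_ideal: "is_ideal I \<Longrightarrow> f \<in> I \<Longrightarrow> drop_A f \<in> I"
  unfolding drop_A_def by (intro ideal_add ideal_smul ideal_mult_ind) auto

lemma drop_A_coeff_A: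
  fixes f :: "hidx \<Rightarrow> 'a::field"
  assumes two: "(2::'a) \<noteq> 0" and f: "f \<in> Hvec"
  shows "drop_A f (A m) = 0"
proof -
  define c :: 'a where "c = 3/8"
  have c: "3/4 = 2 * c" "3/2 = 4 * c" "3/8 = c"
    using two numerals_nonzero[OF two] by (simp_all add: c_def field_simps)
  define g1 where "g1 = hmult (ind (S 1)) f"
  have g1H: "g1 \<in> Hvec"
    by (simp add: g1_def hmult_in_Hvec)
  have g1A: "g1 (A x) = c * (f (A (x + 1)) + f (A (x - 1))) - 2 * c * f (A x)" for x
    unfolding g1_def S_times_coeff_A[OF f] c(1,3) by (simp add: algebra_simps)
  have g2A: "hmult (ind (S 2)) f (A m) = c * (f (A (m + 2)) + f (A (m - 2))) - 2 * c * f (A m)"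
    unfolding S_times_coeff_A[OF f] c(1,3) by (simp add: algebra_simps)
  have "drop_A f (A m) = c * (g1 (A (m + 1)) + g1 (A (m - 1))) - 2 * c * g1 (A m) + 4 * c * g1 (A m)
      - c * hmult (ind (S 2)) f (A m)"
    unfolding drop_A_def g1_def[symmetric] plus_fun_apply smul_apply
      S_times_coeff_A[OF g1H] c by (simp add: algebra_simps)
  also have "\<dots> = 0"
    unfolding g1A g2A by (simp add: algebra_simps)
  finally show ?thesis .
qed

lemma drop_A_coeff_S:
  fixes f :: "hidx \<Rightarrow> 'a::field"
  assumes two: "(2::'a) \<noteq> 0" and f: "f \<in> Hvec"
    and d: "d \<ge> 1" and above: "\<forall>l. d < l \<longrightarrow> f (S l) = 0"
  shows "drop_A f (S (d + 2)) = 2 * (3/8) * (3/8) * f (S d)"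
proof -
  define g1 where "g1 = hmult (ind (S 1)) f"
  have g1H: "g1 \<in> Hvec"
    by (simp add: g1_def hmult_in_Hvec)
  have g1S: "g1 (S l) = 3/4 * f (S l) - 3/8 * (f (S (l + 1)) + f (S (l - 1)))" if "l \<ge> 2" for l
    unfolding g1_def using S_times_coeff_S[OF two f, of l 1] that Hvec_S0[OF f]
    by (simp add: add.commute)
  have "g1 (S (d + 1)) = -(3/8) * f (S d)" "g1 (S (d + 2)) = 0" "g1 (S (d + 3)) = 0"
    using g1S[of "d + 1"] g1S[of "d + 2"] g1S[of "d + 3"] above d by simp_all
  moreover have "hmult (ind (S 2)) f (S (d + 2)) = -(3/8) * f (S d)"
    using S_times_coeff_S[OF two f, of "d + 2" 2] above d Hvec_S0[OF f] by simp
  moreover have "hmult (ind (S 1)) g1 (S (d + 2)) = -(3/8) * g1 (S (d + 1))"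
    using S_times_coeff_S[OF two g1H, of "d + 2" 1] calculation Hvec_S0[OF g1H] d
    by (simp add: add.commute numeral_eq_Suc)
  ultimately show ?thesis
    unfolding drop_A_def g1_def[symmetric] by (simp add: smul_apply)
qed

lemma exists_S_element_without_A:
  fixes f :: "hidx \<Rightarrow> 'a::field"
  assumes two: "(2::'a) \<noteq> 0" and three: "(3::'a) \<noteq> 0" and I: "is_ideal I"
    and f: "f \<in> I" and fS: "f (S j0) \<noteq> 0"
  shows "\<exists>G\<in>I. (\<forall>i. G (A i) = 0) \<and> (\<exists>j. G (S j) \<noteq> 0)"
proof -
  have fH: "f \<in> Hvec"
    using I f by (rule ideal_Hvec)
  obtain d where d: "d \<ge> 1" "f (S d) \<noteq> 0" "\<forall>l. d < l \<longrightarrow> f (S l) = 0"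
    using exists_top_S_coeff[OF fH fS] by blast
  have "2 * (3/8) * (3/8) * f (S d) \<noteq> 0"
    using d(2) two three numerals_nonzero[OF two]
    by (simp only: mult_eq_0_iff divide_eq_0_iff simp_thms)
  then have "drop_A f (S (d + 2)) \<noteq> 0"
    using drop_A_coeff_S[OF two fH d(1,3)] by argo
  then show ?thesis
    using drop_A_in_ideal[OF I f] drop_A_coeff_A[OF two fH] by blast
qed

text \<open>With M the largest a-index of f, the a-coordinates of a_(M+1) f - f/2 cancel because those
  of f sum to 0, while its s_1-coordinate is f (a_M).\<close>
lemma exists_S_element_from_A_element:
  fixes f :: "hidx \<Rightarrow> 'a::field"
  assumes two: "(2::'a) \<noteq> 0" and I: "is_ideal I" and f: "f \<in> I"
    and fS: "\<forall>j. f (S j) = 0" and sum: "sum_A f = 0" and fA: "f (A i0) \<noteq> 0"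
  shows "\<exists>G\<in>I. (\<forall>i. G (A i) = 0) \<and> G (S 1) \<noteq> 0"
proof -
  have fH: "f \<in> Hvec"
    using I f by (rule ideal_Hvec)
  obtain M where fM: "f (A M) \<noteq> 0" and above: "\<forall>i. M < i \<longrightarrow> f (A i) = 0"
    using exists_top_coeff[of f A i0] fH fA by (auto intro: injI)
  define G where "G = hmult (ind (A (M + 1))) f + smul (-(1/2)) f"
  have "G \<in> I"
    unfolding G_def by (intro ideal_add[OF I] ideal_smul[OF I] ideal_mult_ind[OF I] f) auto
  moreover have "G (A m) = 0" for m
    unfolding G_def using A_times_coeff_A[OF two fH, of "M + 1" m] sum sum_S_eq_0[OF fS] fS
    by (simp add: smul_apply)
  moreover have "G (S 1) = f (A M)"
    unfolding G_def using A_times_coeff_S[OF two fH, of 1 "M + 1"] fS above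
    by (simp add: smul_apply add.commute)
  ultimately show ?thesis
    using fM by (intro bexI[of _ G]) auto
qed

lemma exists_S_element_without_A_if_not_Pspan:
  fixes f :: "hidx \<Rightarrow> 'a::field"
  assumes two: "(2::'a) \<noteq> 0" and three: "(3::'a) \<noteq> 0" and I: "is_ideal I"
    and f: "f \<in> I" and nf: "f \<notin> Pspan"
  shows "\<exists>G\<in>I. (\<forall>i. G (A i) = 0) \<and> (\<exists>j. G (S j) \<noteq> 0)"
proof -
  have fH: "f \<in> Hvec"
    using I f by (rule ideal_Hvec)
  show ?thesis
  proof (cases "\<exists>j. f (S j) \<noteq> 0")
    case True
    then show ?thesis
      using exists_S_element_without_A[OF two three I f] by blast
  next
    case False
    then have fS: "\<forall>j. f (S j) = 0"
      by simp
    obtain v where "f v \<noteq> 0" "\<not> is_P v"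
      using nf fH by (auto simp: Pspan_def)
    then obtain i where fA: "f (A i) \<noteq> 0"
      using fS by (cases v) auto
    show ?thesis
    proof (cases "sum_A f = 0")
      case True
      then show ?thesis
        using exists_S_element_from_A_element[OF two I f fS True fA] by blast
    next
      case False
      have "hmult (ind (S 1)) f (S 1) = 3/2 * sum_A f"
        using S_times_coeff_S[OF two fH, of 1 1] fS sum_S_eq_0[OF fS] by simp
      moreover have "3/2 * sum_A f \<noteq> 0"
        using False two three by simp
      ultimately have "hmult (ind (S 1)) f (S 1) \<noteq> 0"
        by argo
      moreover have "hmult (ind (S 1)) f \<in> I"
        by (rule ideal_mult_ind[OF I f]) simp
      ultimately show ?thesis
        using exists_S_element_without_A[OF two three I] by blast
    qed
  qed
qed

lemma exists_S_element_top_dvd_3: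
  fixes G :: "hidx \<Rightarrow> 'a::field"
  assumes two: "(2::'a) \<noteq> 0" and three: "(3::'a) \<noteq> 0" and I: "is_ideal I" and G: "G \<in> I"
    and GA: "\<forall>i. G (A i) = 0" and Gj: "G (S j0) \<noteq> 0"
  shows "\<exists>H\<in>I. (\<forall>i. H (A i) = 0) \<and> (\<exists>n\<ge>1. 3 dvd n \<and> H (S n) \<noteq> 0 \<and> (\<forall>l. H (S l) \<noteq> 0 \<longrightarrow> l \<le> n))"
proof -
  have GH: "G \<in> Hvec"
    using I G by (rule ideal_Hvec)
  obtain d where d: "d \<ge> 1" and Gd: "G (S d) \<noteq> 0" and above: "\<And>l. d < l \<Longrightarrow> G (S l) = 0"
    using exists_top_S_coeff[OF GH Gj] by blast
  define H where "H = hmult (ind (S (2 * d))) G"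
  have "H \<in> I"
    unfolding H_def by (rule ideal_mult_ind[OF I G]) (use d in simp)
  moreover have "\<forall>i. H (A i) = 0"
    unfolding H_def using S_times_coeff_A[OF GH] GA by simp
  moreover have "H (S (3 * d)) = -(3/8) * G (S d)"
    unfolding H_def using S_times_coeff_S[OF two GH, of "3 * d" "2 * d"] d above[of "3 * d"]
      above[of "5 * d"] by (simp add: Hvec_S0[OF GH])
  then have "H (S (3 * d)) \<noteq> 0"
    using Gd two three numerals_nonzero[OF two] by simp
  moreover have "H (S l) = 0" if "3 * d < l" for l
    unfolding H_def using S_times_coeff_S[OF two GH, of l "2 * d"] that d above[of l]
      above[of "2 * d + l"] above[of "l - 2 * d"] by (simp add: Hvec_S0[OF GH])
  ultimately show ?thesis
    using d by (intro bexI[of _ H] conjI exI[of _ "3 * d"]) (auto simp: not_le[symmetric])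
qed

text \<open>Multiplying by p_(r,k) with k beyond all p-degrees reads the top s-coefficient of H off at
  p_(r,k+n); the two choices of r together give -(3/4) times it.\<close>
lemma ideal_meets_Pspan:
  fixes G :: "hidx \<Rightarrow> 'a::field"
  assumes two: "(2::'a) \<noteq> 0" and three: "(3::'a) \<noteq> 0" and I: "is_ideal I" and G: "G \<in> I"
    and GA: "\<forall>i. G (A i) = 0" and Gj: "G (S j0) \<noteq> 0"
  shows "\<exists>f\<in>I. f \<in> Pspan \<and> f \<noteq> 0"
proof -
  obtain H n where HI: "H \<in> I" and HA: "\<forall>i. H (A i) = 0" and n: "n \<ge> 1" "3 dvd n"
    and HSn: "H (S n) \<noteq> 0" and HS: "\<forall>l. H (S l) \<noteq> 0 \<longrightarrow> l \<le> n"
    using exists_S_element_top_dvd_3[OF two three I G GA Gj] by blast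
  have HH: "H \<in> Hvec"
    using I HI by (rule ideal_Hvec)
  obtain b where b: "\<forall>v. H v \<noteq> 0 \<longrightarrow> deg v < b"
    using Hvec_deg_bound[OF HH] by blast
  define k where "k = 3 * b"
  have k: "n < k" "3 dvd k"
    using b HSn by (force simp: k_def)+
  have HP: "\<forall>t h. H (P t h) \<noteq> 0 \<longrightarrow> h < k"
    using b by (force simp: k_def)
  note shift = P_times_coeff_P_shift[OF two HH HA HS HP n k]
  have "hmult (ind (P 1 k)) H (P 1 (k + n)) + hmult (ind (P 2 k)) H (P 2 (k + n))
      = -(3/8) * (2 * H (S n))"
    unfolding shift by (simp add: algebra_simps)
  moreover have "-(3/8) * (2 * H (S n)) \<noteq> 0"
    using HSn two three numerals_nonzero[OF two]
    by (simp only: mult_eq_0_iff neg_equal_0_iff_equal divide_eq_0_iff simp_thms)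
  ultimately obtain r where r: "r = 1 \<or> r = 2" "hmult (ind (P r k)) H (P r (k + n)) \<noteq> 0"
    by (metis add.right_neutral)
  have valid: "valid_idx (P r k)"
    using r k n by auto
  show ?thesis
  proof (intro bexI conjI)
    show "hmult (ind (P r k)) H \<in> I"
      by (rule ideal_mult_ind[OF I HI valid])
    show "hmult (ind (P r k)) H \<in> Pspan"
      by (intro hmult_in_Pspan disjI1 ind_in_Pspan valid) simp
    show "hmult (ind (P r k)) H \<noteq> 0"
      using r(2) by auto
  qed
qed

text \<open>On J, a_0 acts by p_(1,k) \<mapsto> 3/2 p_(1,k) - p_(2,k) and p_(2,k) \<mapsto> 3/2 p_(2,k) - p_(1,k),
  and a_1 by p_(1,k) \<mapsto> 1/2 p_(1,k) and p_(2,k) \<mapsto> p_(1,k) + 5/2 p_(2,k).\<close>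
definition swap_p12 :: "(hidx \<Rightarrow> 'a::field) \<Rightarrow> (hidx \<Rightarrow> 'a)" where
  "swap_p12 f = smul (3/2) f - hmult (ind (A 0)) f"

definition drop_p2 :: "(hidx \<Rightarrow> 'a::field) \<Rightarrow> (hidx \<Rightarrow> 'a)" where
  "drop_p2 f = smul (5/2) f - hmult (ind (A 1)) f"

lemma swap_p12_in_ideal: "is_ideal K \<Longrightarrow> f \<in> K \<Longrightarrow> swap_p12 f \<in> K"
  unfolding swap_p12_def by (intro ideal_diff ideal_smul ideal_mult_ind) auto

lemma drop_p2_in_ideal: "is_ideal K \<Longrightarrow> f \<in> K \<Longrightarrow> drop_p2 f \<in> K"
  unfolding drop_p2_def by (intro ideal_diff ideal_smul ideal_mult_ind) auto

lemma swap_p12_coeff: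
  fixes f :: "hidx \<Rightarrow> 'a::field"
  assumes "(2::'a) \<noteq> 0" "f \<in> Pspan" "0 < k" "3 dvd k"
  shows "swap_p12 f (P 1 k) = f (P 2 k)" "swap_p12 f (P 2 k) = f (P 1 k)"
  using A_times_coeff_P(1,2)[OF assms] by (simp_all add: swap_p12_def smul_apply)

lemma drop_p2_coeff_P1:
  fixes f :: "hidx \<Rightarrow> 'a::field"
  assumes "(2::'a) \<noteq> 0" "f \<in> Pspan" "0 < k" "3 dvd k"
  shows "drop_p2 f (P 1 k) = 2 * f (P 1 k) - f (P 2 k)"
  using A_times_coeff_P(3)[OF assms] by (simp add: drop_p2_def smul_apply field_simps assms(1))

lemma drop_p2_coeff_P2:
  fixes f :: "hidx \<Rightarrow> 'a::field"
  assumes "(2::'a) \<noteq> 0" "f \<in> Pspan"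
  shows "drop_p2 f (P 2 k) = 0"
proof (cases "0 < k \<and> 3 dvd k")
  case True
  then show ?thesis
    using A_times_coeff_P(4)[OF assms] by (simp add: drop_p2_def smul_apply)
next
  case False
  then show ?thesis
    using Pspan_coeff_invalid[OF drop_p2_in_ideal[OF Pspan_ideal assms(2)]] by simp
qed

lemma exists_P1_element:
  fixes K :: "(hidx \<Rightarrow> 'a::field) set"
  assumes two: "(2::'a) \<noteq> 0" and three: "(3::'a) \<noteq> 0" and K: "is_ideal K" "K \<subseteq> Pspan"
    and f: "f \<in> K" "f \<noteq> 0"
  shows "\<exists>h\<in>K. (\<forall>k. h (P 2 k) = 0) \<and> (\<exists>k. h (P 1 k) \<noteq> 0)"
proof -
  have fP: "f \<in> Pspan"
    using f K by blast
  obtain v where "f v \<noteq> 0"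
    using f(2) by (auto simp: fun_eq_iff)
  then obtain t k where fk: "f (P t k) \<noteq> 0" and valid: "valid_idx (P t k)"
    using fP Pspan_supp Pspan_coeff_invalid by metis
  show ?thesis
  proof (cases "2 * f (P 1 k) - f (P 2 k) = 0")
    case False
    then show ?thesis
      using drop_p2_in_ideal[OF K(1) f(1)] drop_p2_coeff_P1[OF two fP] drop_p2_coeff_P2[OF two fP] valid
      by (metis valid_idx.simps(3))
  next
    case True
    define h where "h = drop_p2 (swap_p12 f)"
    have swP: "swap_p12 f \<in> Pspan"
      using swap_p12_in_ideal[OF Pspan_ideal fP] .
    have k: "0 < k" "3 dvd k"
      using valid by auto
    have "h (P 1 k) = 2 * f (P 2 k) - f (P 1 k)"
      by (simp add: h_def drop_p2_coeff_P1[OF two swP k] swap_p12_coeff[OF two fP k])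
    also have "\<dots> = 3 * f (P 1 k)"
      using True by algebra
    finally have "h (P 1 k) = 3 * f (P 1 k)" .
    moreover have "f (P 1 k) \<noteq> 0"
      using True fk valid by auto
    ultimately have "h (P 1 k) \<noteq> 0"
      using three by simp
    moreover have "h \<in> K"
      unfolding h_def using K(1) f(1) by (intro drop_p2_in_ideal swap_p12_in_ideal)
    ultimately show ?thesis
      using drop_p2_coeff_P2[OF two swP] unfolding h_def by blast
  qed
qed

section \<open>Leading elements and finite codimension\<close>

text \<open>Multiplying h by s_(n-D) shifts its top p_1-coefficient to p_(1,n) and produces nothing
  above it.\<close>
lemma exists_P1_top_element:
  fixes K :: "(hidx \<Rightarrow> 'a::field) set"
  assumes two: "(2::'a) \<noteq> 0" and three: "(3::'a) \<noteq> 0" and K: "is_ideal K" "K \<subseteq> Pspan"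
    and h: "h \<in> K" and h2: "\<forall>k. h (P 2 k) = 0"
    and hD: "h (P 1 D) \<noteq> 0" and above: "\<forall>k. D < k \<longrightarrow> h (P 1 k) = 0"
    and n: "0 < n" "3 dvd n" "D < n"
  shows "\<exists>g\<in>K. g (P 1 n) \<noteq> 0 \<and> (\<forall>r k. n \<le> k \<longrightarrow> (r, k) \<noteq> (1, n) \<longrightarrow> g (P r k) = 0)"
proof -
  have hP: "h \<in> Pspan"
    using h K by blast
  define j where "j = n - D"
  define g where "g = hmult (ind (S j)) h"
  have j: "j \<ge> 1" "n - j = D" "j + D = n"
    using n by (auto simp: j_def)
  have gK: "g \<in> K"
    unfolding g_def by (rule ideal_mult_ind[OF K(1) h]) (use j in simp)
  then have gP: "g \<in> Pspan"
    using K by blast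
  have g_top: "g (P r k) = -(3/8) * of_bool (r = 1) * h (P 1 (k - j))" if "n \<le> k" "0 < k" "3 dvd k" for r k
    unfolding g_def using that above j
    by (intro S_times_coeff_P_above[OF hP h2]) (auto simp: not_less[symmetric])
  have "g (P 1 n) \<noteq> 0"
    using g_top[of n 1] n j hD two three numerals_nonzero[OF two] by simp
  moreover have "g (P r k) = 0" if "n \<le> k" "(r, k) \<noteq> (1, n)" for r k
  proof (cases "0 < k \<and> 3 dvd k")
    case True
    then show ?thesis
      using g_top[of k r] that above j by (cases "r = 1") auto
  next
    case False
    then show ?thesis
      using Pspan_coeff_invalid[OF gP] by simp
  qed
  ultimately show ?thesis
    using gK by blast
qed

lemma P_leading_element:
  fixes K :: "(hidx \<Rightarrow> 'a::field) set"
  assumes two: "(2::'a) \<noteq> 0" and three: "(3::'a) \<noteq> 0" and K: "is_ideal K" "K \<subseteq> Pspan"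
    and h: "h \<in> K" and h2: "\<forall>k. h (P 2 k) = 0"
    and hD: "h (P 1 D) \<noteq> 0" and above: "\<forall>k. D < k \<longrightarrow> h (P 1 k) = 0"
    and x: "valid_idx (P t n)" "D < n"
  shows "\<exists>g\<in>K. g (P t n) \<noteq> 0 \<and> (\<forall>y. g y \<noteq> 0 \<longrightarrow> y \<noteq> P t n \<longrightarrow> deg y < n)"
proof -
  have n: "0 < n" "3 dvd n"
    using x by auto
  obtain g where gK: "g \<in> K" and g1: "g (P 1 n) \<noteq> 0"
    and g_high: "\<And>r k. n \<le> k \<Longrightarrow> (r, k) \<noteq> (1, n) \<Longrightarrow> g (P r k) = 0"
    using exists_P1_top_element[OF two three K h h2 hD above n x(2)] by blast
  have gP: "g \<in> Pspan"
    using gK K by blast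
  show ?thesis
  proof (cases "t = 1")
    case True
    then show ?thesis
      using g1 gK Pspan_deg_less[OF gP _ _ g_high] by blast
  next
    case False
    then have t: "t = 2"
      using x by auto
    have "swap_p12 g (P 2 n) \<noteq> 0"
      using g1 swap_p12_coeff[OF two gP n] by simp
    moreover have "swap_p12 g (P r k) = 0" if "n \<le> k" "(r, k) \<noteq> (2, n)" for r k
    proof (cases "0 < k \<and> 3 dvd k \<and> (r = 1 \<or> r = 2)")
      case True
      then show ?thesis
        using swap_p12_coeff[OF two gP, of k] g_high[of k] that by auto
    next
      case False
      then show ?thesis
        using Pspan_coeff_invalid[OF swap_p12_in_ideal[OF Pspan_ideal gP]] by auto
    qed
    moreover have "swap_p12 g \<in> Pspan"
      using swap_p12_in_ideal[OF Pspan_ideal gP] .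
    ultimately show ?thesis
      using swap_p12_in_ideal[OF K(1) gK] Pspan_deg_less[of "swap_p12 g" _ 2 n] t by blast
  qed
qed

lemma P_leading_elements:
  fixes K :: "(hidx \<Rightarrow> 'a::field) set"
  assumes two: "(2::'a) \<noteq> 0" and three: "(3::'a) \<noteq> 0" and K: "is_ideal K" "K \<subseteq> Pspan"
    and f: "f \<in> K" "f \<noteq> 0"
  shows "\<exists>D. \<forall>t n. valid_idx (P t n) \<longrightarrow> D < n \<longrightarrow>
           (\<exists>g\<in>K. g (P t n) \<noteq> 0 \<and> (\<forall>y. g y \<noteq> 0 \<longrightarrow> y \<noteq> P t n \<longrightarrow> deg y < n))"
proof -
  obtain h k where h: "h \<in> K" "\<forall>k. h (P 2 k) = 0" and hk: "h (P 1 k) \<noteq> 0"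
    using exists_P1_element[OF two three K f] by blast
  have "h \<in> Hvec"
    using h(1) K Pspan_Hvec by blast
  then obtain D where "h (P 1 D) \<noteq> 0" "\<forall>k. D < k \<longrightarrow> h (P 1 k) = 0"
    using exists_top_coeff[of h "P 1" k] hk by (auto intro: injI)
  then show ?thesis
    using P_leading_element[OF two three K h] by blast
qed

lemma S_leading_element:
  fixes G :: "hidx \<Rightarrow> 'a::field"
  assumes two: "(2::'a) \<noteq> 0" and three: "(3::'a) \<noteq> 0" and I: "is_ideal I" and G: "G \<in> I"
    and GA: "\<forall>i. G (A i) = 0" and Gd: "G (S d) \<noteq> 0" and above: "\<forall>l. d < l \<longrightarrow> G (S l) = 0"
    and j: "d < j"
  shows "\<exists>g\<in>I. g (S j) \<noteq> 0 \<and> (\<forall>y. g y \<noteq> 0 \<longrightarrow> y \<noteq> S j \<longrightarrow> is_P y \<or> deg y < j)"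
proof -
  have GH: "G \<in> Hvec"
    using I G by (rule ideal_Hvec)
  have d: "d \<ge> 1"
    using Gd Hvec_S0[OF GH] by (cases d) auto
  define g where "g = hmult (ind (S (j - d))) G"
  have gI: "g \<in> I"
    unfolding g_def by (rule ideal_mult_ind[OF I G]) (use j in simp)
  have gA: "g (A m) = 0" for m
    unfolding g_def using S_times_coeff_A[OF GH] GA by simp
  have gS: "g (S l) = 0" if "j < l" for l
  proof -
    have "l \<noteq> j - d"
      using that by simp
    then show ?thesis
      unfolding g_def using S_times_coeff_S[OF two GH, of l "j - d"] that j d above Hvec_S0[OF GH] by simp
  qed
  have "j \<noteq> j - d"
    using j d by simp
  then have "g (S j) = -(3/8) * G (S d)"
    unfolding g_def using S_times_coeff_S[OF two GH, of j "j - d"] j d above Hvec_S0[OF GH] by simp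
  then have "g (S j) \<noteq> 0"
    using Gd two three numerals_nonzero[OF two] by simp
  moreover have "is_P y \<or> deg y < j" if "g y \<noteq> 0" "y \<noteq> S j" for y
    using that gA gS by (cases y) (auto, meson linorder_neqE_nat)
  ultimately show ?thesis
    using gI by blast
qed

lemma abs_less_if_near_shift_to_zero:
  fixes m m' :: int
  assumes "int d < \<bar>m\<bar>" "\<bar>m' - (m - sgn m * int d)\<bar> \<le> int d" "m' \<noteq> m"
  shows "\<bar>m'\<bar> < \<bar>m\<bar>"
  using assms by (auto simp: sgn_if abs_if split: if_splits)

lemma A_times_minus_coeff:
  fixes G :: "hidx \<Rightarrow> 'a::field"
  assumes two: "(2::'a) \<noteq> 0" and G: "G \<in> Hvec" and GA: "\<forall>i. G (A i) = 0"
  shows "m \<noteq> i \<Longrightarrow> (hmult (ind (A i)) G - smul (3/2) G) (A m)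
      = 3/8 * (G (S (nat (i - m))) + G (S (nat (m - i))))"
    and "j \<ge> 1 \<Longrightarrow> (hmult (ind (A i)) G - smul (3/2) G) (S j) = 0"
  using A_times_coeff_A[OF two G, of i m] A_times_coeff_S[OF two G, of j i] GA
  by (simp_all add: smul_apply)

text \<open>Multiplying by a_i, where i is m moved d steps towards 0, and subtracting 3/2 G leaves no
  s-coordinates and puts the top s-coefficient of G at a_m; every other a-coordinate is within
  distance d of i, hence closer to 0 than m.\<close>
lemma A_leading_element:
  fixes G :: "hidx \<Rightarrow> 'a::field"
  assumes two: "(2::'a) \<noteq> 0" and three: "(3::'a) \<noteq> 0" and I: "is_ideal I" and G: "G \<in> I"
    and GA: "\<forall>i. G (A i) = 0" and Gd: "G (S d) \<noteq> 0" and above: "\<forall>l. d < l \<longrightarrow> G (S l) = 0"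
    and m: "d < nat \<bar>m\<bar>"
  shows "\<exists>g\<in>I. g (A m) \<noteq> 0 \<and> (\<forall>y. g y \<noteq> 0 \<longrightarrow> y \<noteq> A m \<longrightarrow> is_P y \<or> deg y < nat \<bar>m\<bar>)"
proof -
  have GH: "G \<in> Hvec"
    using I G by (rule ideal_Hvec)
  define i where "i = m - sgn m * int d"
  define g where "g = hmult (ind (A i)) G - smul (3/2) G"
  note g_coeff = A_times_minus_coeff[OF two GH GA, of _ i, folded g_def]
  have gI: "g \<in> I"
    unfolding g_def by (intro ideal_diff[OF I] ideal_smul[OF I] ideal_mult_ind[OF I] G) simp_all
  have "d \<noteq> 0"
    using Gd Hvec_S0[OF GH] by (cases d) auto
  then have "m \<noteq> i" "{nat (i - m), nat (m - i)} = {0, d}"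
    using m by (auto simp: i_def sgn_if)
  then have "g (A m) = 3/8 * G (S d)"
    using g_coeff(1)[of m] Hvec_S0[OF GH] by (auto simp: doubleton_eq_iff)
  moreover have "3/8 * G (S d) \<noteq> 0"
    using Gd three numerals_nonzero[OF two] by simp
  ultimately have "g (A m) \<noteq> 0"
    by argo
  moreover have "deg y < nat \<bar>m\<bar>" if gy: "g y \<noteq> 0" "y \<noteq> A m" "\<not> is_P y" for y
  proof (cases y)
    case (A m')
    have "m' = i \<or> G (S (nat (i - m'))) \<noteq> 0 \<or> G (S (nat (m' - i))) \<noteq> 0"
      using gy(1) g_coeff(1)[of m'] A by (metis add.right_neutral mult_zero_right)
    moreover have "0 < l \<and> l \<le> d" if "G (S l) \<noteq> 0" for l
      using that above Hvec_S0[OF GH] by (metis gr0I not_less)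
    ultimately have "\<bar>m' - i\<bar> \<le> int d"
      by fastforce
    then show ?thesis
      using abs_less_if_near_shift_to_zero[of d m m'] A gy(2) m by (simp add: i_def)
  next
    case (S j)
    then show ?thesis
      using gy(1) g_coeff(2) Hvec_valid_idx[OF ideal_Hvec[OF I gI]] by force
  next
    case (P t k)
    then show ?thesis
      using gy(3) by simp
  qed
  ultimately show ?thesis
    using gI by blast
qed

lemma P_basis_reduction:
  fixes K :: "(hidx \<Rightarrow> 'a::field) set"
  assumes two: "(2::'a) \<noteq> 0" and three: "(3::'a) \<noteq> 0" and K: "is_ideal K" "K \<subseteq> Pspan"
    and f: "f \<in> K" "f \<noteq> 0"
  shows "\<exists>D. \<forall>Q. is_subspace Q \<longrightarrow> K \<subseteq> Q \<longrightarrow> (\<forall>x. is_P x \<and> valid_idx x \<and> deg x \<le> D \<longrightarrow> ind x \<in> Q)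
           \<longrightarrow> (\<forall>x. is_P x \<and> valid_idx x \<longrightarrow> ind x \<in> Q)"
proof -
  obtain D where D: "\<forall>t n. valid_idx (P t n) \<longrightarrow> D < n \<longrightarrow>
      (\<exists>g\<in>K. g (P t n) \<noteq> 0 \<and> (\<forall>y. g y \<noteq> 0 \<longrightarrow> y \<noteq> P t n \<longrightarrow> deg y < n))"
    using P_leading_elements[OF two three K f] by blast
  have "ind x \<in> Q"
    if Q: "is_subspace Q" "K \<subseteq> Q"
      and low: "\<forall>x. is_P x \<and> valid_idx x \<and> deg x \<le> D \<longrightarrow> ind x \<in> Q"
      and x: "is_P x \<and> valid_idx x" for Q x
  proof (rule basis_in_subspace_by_leading_elements[OF Q(1), of "\<lambda>x. is_P x \<and> valid_idx x" deg D])
    fix x assume x: "is_P x \<and> valid_idx x" "D < deg x"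
    then obtain t n where xtn: "x = P t n"
      by (cases x) auto
    have "valid_idx (P t n)" "D < n"
      using x xtn by auto
    from D[rule_format, OF this] obtain g
      where g: "g \<in> K" "g x \<noteq> 0" "\<forall>y. g y \<noteq> 0 \<longrightarrow> y \<noteq> x \<longrightarrow> deg y < deg x"
      using xtn by auto
    have "g \<in> Pspan"
      using g(1) K(2) by blast
    then have "\<forall>y. g y \<noteq> 0 \<longrightarrow> is_P y \<and> valid_idx y"
      using Pspan_Hvec Hvec_valid_idx by (auto simp: Pspan_def)
    then show "\<exists>g\<in>Q. g \<in> Hvec \<and> g x \<noteq> 0 \<and>
        (\<forall>y. g y \<noteq> 0 \<longrightarrow> y \<noteq> x \<longrightarrow> ind y \<in> Q \<or> (is_P y \<and> valid_idx y) \<and> deg y < deg x)"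
      using g Q(2) K Pspan_Hvec by blast
  qed (use low x in auto)
  then show ?thesis
    by blast
qed

lemma AS_basis_reduction:
  fixes G :: "hidx \<Rightarrow> 'a::field"
  assumes two: "(2::'a) \<noteq> 0" and three: "(3::'a) \<noteq> 0" and I: "is_ideal I" and G: "G \<in> I"
    and GA: "\<forall>i. G (A i) = 0" and Gd: "G (S d) \<noteq> 0" and above: "\<forall>l. d < l \<longrightarrow> G (S l) = 0"
    and Q: "is_subspace Q" "I \<subseteq> Q" and QP: "\<forall>x. is_P x \<and> valid_idx x \<longrightarrow> ind x \<in> Q"
    and low: "\<forall>x. \<not> is_P x \<and> valid_idx x \<and> deg x \<le> d \<longrightarrow> ind x \<in> Q"
  shows "\<not> is_P x \<Longrightarrow> valid_idx x \<Longrightarrow> ind x \<in> Q"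
proof (rule basis_in_subspace_by_leading_elements[OF Q(1), of "\<lambda>x. \<not> is_P x \<and> valid_idx x" deg d])
  fix x assume x: "\<not> is_P x \<and> valid_idx x" "d < deg x"
  have "\<exists>g\<in>I. g x \<noteq> 0 \<and> (\<forall>y. g y \<noteq> 0 \<longrightarrow> y \<noteq> x \<longrightarrow> is_P y \<or> deg y < deg x)"
  proof (cases x)
    case (A m)
    then show ?thesis
      using A_leading_element[OF two three I G GA Gd above] x(2) by simp
  next
    case (S j)
    then show ?thesis
      using S_leading_element[OF two three I G GA Gd above] x(2) by simp
  next
    case (P t k)
    then show ?thesis
      using x(1) by simp
  qed
  then obtain g where g: "g \<in> I" "g x \<noteq> 0" "\<forall>y. g y \<noteq> 0 \<longrightarrow> y \<noteq> x \<longrightarrow> is_P y \<or> deg y < deg x"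
    by blast
  have gH: "g \<in> Hvec"
    using I g(1) by (rule ideal_Hvec)
  then have "\<forall>y. g y \<noteq> 0 \<longrightarrow> y \<noteq> x \<longrightarrow> ind y \<in> Q \<or> (\<not> is_P y \<and> valid_idx y) \<and> deg y < deg x"
    using g(3) QP Hvec_valid_idx by blast
  then show "\<exists>g\<in>Q. g \<in> Hvec \<and> g x \<noteq> 0 \<and>
      (\<forall>y. g y \<noteq> 0 \<longrightarrow> y \<noteq> x \<longrightarrow> ind y \<in> Q \<or> (\<not> is_P y \<and> valid_idx y) \<and> deg y < deg x)"
    using g(1,2) gH Q(2) by blast
qed (use low in auto)

lemma fin_codim_Pspan:
  fixes I :: "(hidx \<Rightarrow> 'a::field) set"
  assumes two: "(2::'a) \<noteq> 0" and three: "(3::'a) \<noteq> 0"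
    and I: "is_ideal I" "I \<noteq> {0}" "I \<subseteq> Pspan"
  shows "fin_codim I Pspan"
proof -
  obtain f where f: "f \<in> I" "f \<noteq> 0"
    using I(1,2) by (auto simp: is_ideal_def)
  obtain D where D: "\<forall>Q. is_subspace Q \<longrightarrow> I \<subseteq> Q \<longrightarrow> (\<forall>x. is_P x \<and> valid_idx x \<and> deg x \<le> D \<longrightarrow> ind x \<in> Q)
      \<longrightarrow> (\<forall>x. is_P x \<and> valid_idx x \<longrightarrow> ind x \<in> Q)"
    using P_basis_reduction[OF two three I(1,3) f] by blast
  define F where "F = {x. is_P x \<and> valid_idx x \<and> deg x \<le> D}"
  define Q where "Q = plus_span I (ind ` F)"
  have I_sub: "is_subspace I"
    using I(1) by (rule ideal_is_subspace)
  have F: "finite F"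
    by (rule finite_subset[OF _ finite_low_deg]) (auto simp: F_def)
  have Q: "is_subspace Q" "I \<subseteq> Q" "\<forall>x. is_P x \<and> valid_idx x \<and> deg x \<le> D \<longrightarrow> ind x \<in> Q"
    using subspace_plus_span[OF I_sub] subset_plus_span generator_in_plus_span[OF I_sub finite_imageI[OF F]]
    by (auto simp: Q_def F_def)
  then have QP: "\<forall>x. is_P x \<and> valid_idx x \<longrightarrow> ind x \<in> Q"
    using D by blast
  have "ind v \<in> Q" if "w \<in> Pspan" "w v \<noteq> 0" for w :: "hidx \<Rightarrow> 'a" and v
  proof -
    have "is_P v" "valid_idx v"
      using that Pspan_Hvec Hvec_valid_idx by (auto simp: Pspan_def)
    then show ?thesis
      using QP by blast
  qed
  then show ?thesis
    unfolding Q_def by (intro fin_codimI[OF I_sub F]) (auto simp: F_def ind_in_Pspan Pspan_Hvec)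
qed

lemma fin_codim_Hvec:
  fixes I :: "(hidx \<Rightarrow> 'a::field) set"
  assumes two: "(2::'a) \<noteq> 0" and three: "(3::'a) \<noteq> 0"
    and I: "is_ideal I" and not_J: "\<not> I \<subseteq> Pspan"
  shows "fin_codim I Hvec"
proof -
  obtain f where "f \<in> I" "f \<notin> Pspan"
    using not_J by blast
  then obtain G j where G: "G \<in> I" "\<forall>i. G (A i) = 0" and Gj: "G (S j) \<noteq> 0"
    using exists_S_element_without_A_if_not_Pspan[OF two three I] by blast
  obtain d where Gd: "G (S d) \<noteq> 0" and above: "\<forall>l. d < l \<longrightarrow> G (S l) = 0"
    using exists_top_S_coeff[OF ideal_Hvec[OF I G(1)] Gj] by blast
  obtain f1 where f1: "f1 \<in> I \<inter> Pspan" "f1 \<noteq> 0"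
    using ideal_meets_Pspan[OF two three I G Gj] by blast
  obtain D where D: "\<forall>Q. is_subspace Q \<longrightarrow> I \<inter> Pspan \<subseteq> Q
      \<longrightarrow> (\<forall>x. is_P x \<and> valid_idx x \<and> deg x \<le> D \<longrightarrow> ind x \<in> Q)
      \<longrightarrow> (\<forall>x. is_P x \<and> valid_idx x \<longrightarrow> ind x \<in> Q)"
    using P_basis_reduction[OF two three ideal_Int[OF I Pspan_ideal] _ f1] by blast
  define F where "F = {x. valid_idx x \<and> deg x \<le> max D d}"
  define Q where "Q = plus_span I (ind ` F)"
  have I_sub: "is_subspace I"
    using I by (rule ideal_is_subspace)
  have F: "finite F"
    using finite_low_deg by (simp add: F_def)
  have Q: "is_subspace Q" "I \<subseteq> Q" "\<And>x. x \<in> F \<Longrightarrow> ind x \<in> Q"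
    using subspace_plus_span[OF I_sub] subset_plus_span generator_in_plus_span[OF I_sub finite_imageI[OF F]]
    by (auto simp: Q_def)
  have "\<forall>x. is_P x \<and> valid_idx x \<and> deg x \<le> D \<longrightarrow> ind x \<in> Q"
    using Q(3) by (auto simp: F_def)
  then have QP: "\<forall>x. is_P x \<and> valid_idx x \<longrightarrow> ind x \<in> Q"
    using D Q(1,2) by blast
  have "\<forall>x. \<not> is_P x \<and> valid_idx x \<and> deg x \<le> d \<longrightarrow> ind x \<in> Q"
    using Q(3) by (auto simp: F_def)
  then have "ind x \<in> Q" if "valid_idx x" for x
    using that QP AS_basis_reduction[OF two three I G Gd above Q(1,2) QP] by blast
  then show ?thesis
    unfolding Q_def using Hvec_valid_idx
    by (intro fin_codimI[OF I_sub F]) (auto simp: F_def ind_in_Hvec)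
qed

theorem corollary1p6:
  assumes "(2::'a::field) \<noteq> 0" and "(3::'a) \<noteq> 0"
  shows "(\<forall>I::(hidx \<Rightarrow> 'a) set. is_ideal I \<longrightarrow> (fin_codim I Hvec \<longleftrightarrow> \<not> I \<subseteq> Jid))
       \<and> (\<forall>I::(hidx \<Rightarrow> 'a) set. is_ideal I \<and> I \<noteq> {0} \<and> I \<subseteq> Jid \<longrightarrow> fin_codim I Jid)"
  unfolding Jid_eq_Pspan
  using fin_codim_Hvec[OF assms] not_fin_codim_Hvec fin_codim_Pspan[OF assms] by blast

end
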